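(* Let $\mathcal U$ be an ultrafilter on a set $I$ and let $(M_i)_{i\in I}$ be a family of pointed metric spaces. Define $T\colon (\mathrm{Lip}_0(M_i))_{\mathcal U}\rightarrow \mathrm{Lip}_0((M_i)_{\mathcal U})$ by \[ T\big((f_i)_{\mathcal U}\big)\big((x_i)_{\mathcal U}\big)=\lim_{\mathcal U,i} f_i(x_i). \] Then $T$ is a well-defined linear operator with $\|T\|\leq 1$, and $T\big(B_{(\mathrm{Lip}_0(M_i))_{\mathcal U}}\big)$ is a $1$-norming set for $\mathcal F((M_i)_{\mathcal U})$ (where $\mathrm{Lip}_0((M_i)_{\mathcal U})$ is identified with $\mathcal F((M_i)_{\mathcal U})^*$).
   Context: Ultraproduct of metric spaces: given a set $I$, an ultrafilter $\mathcal U$ on $I$ and metric spaces $(M_i,d_i)$ with distinguished points $0_i\in M_i$, let $\ell_\infty(M_i)=\{(x_i)_{i\in I}\in\prod_i M_i:\sup_i d_i(x_i,0_i)<\infty\}$ with pseudometric $d((x_i),(y_i))=\lim_{\mathcal U,i}d_i(x_i,y_i)$. The ultraproduct $(M_i)_{\mathcal U}$ is the metric quotient of $\ell_\infty(M_i)$ identifying points at distance $0$; the class of $(x_i)_{i\in I}$ is written $(x_i)_{\mathcal U}$, and $(M_i)_{\mathcal U}$ is pointed by $(0_i)_{\mathcal U}$. For normed spaces the distinguished point is $0$, and this gives the usual Banach space ultraproduct with norm $\|(x_i)_{\mathcal U}\|=\lim_{\mathcal U}\|x_i\|$. For a pointed metric space $M$ (base point $0$), $\mathrm{Lip}_0(M)$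 is the Banach space of real-valued Lipschitz functions on $M$ vanishing at $0$, normed by the Lipschitz constant; $\delta(x)\in\mathrm{Lip}_0(M)^*$ is evaluation at $x$; the Lipschitz-free space is $\mathcal F(M)=\overline{\mathrm{span}}\{\delta(x):x\in M\}\subset \mathrm{Lip}_0(M)^*$, and $\mathcal F(M)^*=\mathrm{Lip}_0(M)$. A set $A\subset X^*$ is $\lambda$-norming for a Banach space $X$ if $\sup_{x^*\in A\cap B_{X^*}}|x^*(x)|\geq \frac1\lambda\|x\|$ for all $x\in X$. *)

theory Defs
  imports "HOL-Analysis.Analysis"
begin

text \<open>An ultrafilter on the index type 'i (the index set I is the universe of 'i).\<close>
definition is_ultrafilter :: "'i filter \<Rightarrow> bool" where
  "is_ultrafilter U \<longleftrightarrow> U \<noteq> bot \<and>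
     (\<forall>A. eventually (\<lambda>i. i \<in> A) U \<or> eventually (\<lambda>i. i \<notin> A) U)"

text \<open>Functions are taken extensional (zero outside the carrier), so that Lip0 is a
  genuine vector space of functions.\<close>
definition Lip0 :: "'a set \<Rightarrow> ('a \<Rightarrow> 'a \<Rightarrow> real) \<Rightarrow> 'a \<Rightarrow> ('a \<Rightarrow> real) set" where
  "Lip0 M d z = {f. (\<forall>x. x \<notin> M \<longrightarrow> f x = 0) \<and> f z = 0 \<and>
                    (\<exists>L. \<forall>x\<in>M. \<forall>y\<in>M. \<bar>f x - f y\<bar> \<le> L * d x y)}"

definition lipnorm :: "'a set \<Rightarrow> ('a \<Rightarrow> 'a \<Rightarrow> real) \<Rightarrow> ('a \<Rightarrow> real) \<Rightarrow> real" where
  "lipnorm M d f = Sup (insert 0 {\<bar>f x - f y\<bar> / d x y | x y. x \<in> M \<and> y \<in> M \<and> x \<noteq> y})"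

definition dualnorm :: "'a set \<Rightarrow> ('a \<Rightarrow> 'a \<Rightarrow> real) \<Rightarrow> 'a \<Rightarrow> (('a \<Rightarrow> real) \<Rightarrow> real) \<Rightarrow> real" where
  "dualnorm M d z \<phi> = Sup {\<bar>\<phi> f\<bar> | f. f \<in> Lip0 M d z \<and> lipnorm M d f \<le> 1}"

definition Lip0_dual :: "'a set \<Rightarrow> ('a \<Rightarrow> 'a \<Rightarrow> real) \<Rightarrow> 'a \<Rightarrow> (('a \<Rightarrow> real) \<Rightarrow> real) set" where
  "Lip0_dual M d z = {\<phi>. (\<forall>f. f \<notin> Lip0 M d z \<longrightarrow> \<phi> f = 0) \<and>
      (\<forall>f\<in>Lip0 M d z. \<forall>g\<in>Lip0 M d z. \<forall>a b. \<phi> (\<lambda>x. a * f x + b * g x) = a * \<phi> f + b * \<phi> g) \<and>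
      (\<exists>C. \<forall>f\<in>Lip0 M d z. \<bar>\<phi> f\<bar> \<le> C * lipnorm M d f)}"

definition delta :: "'a set \<Rightarrow> ('a \<Rightarrow> 'a \<Rightarrow> real) \<Rightarrow> 'a \<Rightarrow> 'a \<Rightarrow> ('a \<Rightarrow> real) \<Rightarrow> real" where
  "delta M d z x = (\<lambda>f. if f \<in> Lip0 M d z then f x else 0)"

text \<open>F(M) = closed linear span of the delta(x), x in M, in Lip0(M)^*.\<close>
definition lip_free_space :: "'a set \<Rightarrow> ('a \<Rightarrow> 'a \<Rightarrow> real) \<Rightarrow> 'a \<Rightarrow> (('a \<Rightarrow> real) \<Rightarrow> real) set" where
  "lip_free_space M d z = {\<phi> \<in> Lip0_dual M d z. \<forall>e>0. \<exists>(S::nat set) a x. finite S \<and> x ` S \<subseteq> M \<and>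
      dualnorm M d z (\<lambda>f. \<phi> f - (\<Sum>k\<in>S. a k * delta M d z (x k) f)) < e}"

text \<open>A set A of elements of Lip0(M) = F(M)^* is lambda-norming for F(M)
  (f acts on \<phi> by \<phi> f).\<close>
definition norming :: "real \<Rightarrow> ('a \<Rightarrow> real) set \<Rightarrow> 'a set \<Rightarrow> ('a \<Rightarrow> 'a \<Rightarrow> real) \<Rightarrow> 'a \<Rightarrow> bool" where
  "norming lam A M d z \<longleftrightarrow> (\<forall>\<phi>\<in>lip_free_space M d z.
      Sup {\<bar>\<phi> f\<bar> | f. f \<in> A \<and> f \<in> Lip0 M d z \<and> lipnorm M d f \<le> 1} \<ge> dualnorm M d z \<phi> / lam)"

definition linf_pts :: "('i \<Rightarrow> 'a set) \<Rightarrow> ('i \<Rightarrow> 'a \<Rightarrow> 'a \<Rightarrow> real) \<Rightarrow> ('i \<Rightarrow> 'a) \<Rightarrow> ('i \<Rightarrow> 'a) set" where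
  "linf_pts M d z = {x. (\<forall>i. x i \<in> M i) \<and> (\<exists>C. \<forall>i. d i (x i) (z i) \<le> C)}"

definition upseudo :: "'i filter \<Rightarrow> ('i \<Rightarrow> 'a \<Rightarrow> 'a \<Rightarrow> real) \<Rightarrow> ('i \<Rightarrow> 'a) \<Rightarrow> ('i \<Rightarrow> 'a) \<Rightarrow> real" where
  "upseudo U d x y = Lim U (\<lambda>i. d i (x i) (y i))"

definition upt_class :: "'i filter \<Rightarrow> ('i \<Rightarrow> 'a set) \<Rightarrow> ('i \<Rightarrow> 'a \<Rightarrow> 'a \<Rightarrow> real) \<Rightarrow> ('i \<Rightarrow> 'a) \<Rightarrow> ('i \<Rightarrow> 'a) \<Rightarrow> ('i \<Rightarrow> 'a) set" where
  "upt_class U M d z x = {y \<in> linf_pts M d z. upseudo U d x y = 0}"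

definition upts :: "'i filter \<Rightarrow> ('i \<Rightarrow> 'a set) \<Rightarrow> ('i \<Rightarrow> 'a \<Rightarrow> 'a \<Rightarrow> real) \<Rightarrow> ('i \<Rightarrow> 'a) \<Rightarrow> ('i \<Rightarrow> 'a) set set" where
  "upts U M d z = upt_class U M d z ` linf_pts M d z"

definition udist :: "'i filter \<Rightarrow> ('i \<Rightarrow> 'a \<Rightarrow> 'a \<Rightarrow> real) \<Rightarrow> ('i \<Rightarrow> 'a) set \<Rightarrow> ('i \<Rightarrow> 'a) set \<Rightarrow> real" where
  "udist U d p q = upseudo U d (SOME x. x \<in> p) (SOME y. y \<in> q)"

definition ubase :: "'i filter \<Rightarrow> ('i \<Rightarrow> 'a set) \<Rightarrow> ('i \<Rightarrow> 'a \<Rightarrow> 'a \<Rightarrow> real) \<Rightarrow> ('i \<Rightarrow> 'a) \<Rightarrow> ('i \<Rightarrow> 'a) set" where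
  "ubase U M d z = upt_class U M d z z"

definition linf_lip :: "('i \<Rightarrow> 'a set) \<Rightarrow> ('i \<Rightarrow> 'a \<Rightarrow> 'a \<Rightarrow> real) \<Rightarrow> ('i \<Rightarrow> 'a) \<Rightarrow> ('i \<Rightarrow> 'a \<Rightarrow> real) set" where
  "linf_lip M d z = {F. (\<forall>i. F i \<in> Lip0 (M i) (d i) (z i)) \<and>
                        (\<exists>C. \<forall>i. lipnorm (M i) (d i) (F i) \<le> C)}"

definition ulip_class :: "'i filter \<Rightarrow> ('i \<Rightarrow> 'a set) \<Rightarrow> ('i \<Rightarrow> 'a \<Rightarrow> 'a \<Rightarrow> real) \<Rightarrow> ('i \<Rightarrow> 'a) \<Rightarrow> ('i \<Rightarrow> 'a \<Rightarrow> real) \<Rightarrow> ('i \<Rightarrow> 'a \<Rightarrow> real) set" where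
  "ulip_class U M d z F = {G \<in> linf_lip M d z.
       Lim U (\<lambda>i. lipnorm (M i) (d i) (\<lambda>x. F i x - G i x)) = 0}"

definition ulip :: "'i filter \<Rightarrow> ('i \<Rightarrow> 'a set) \<Rightarrow> ('i \<Rightarrow> 'a \<Rightarrow> 'a \<Rightarrow> real) \<Rightarrow> ('i \<Rightarrow> 'a) \<Rightarrow> ('i \<Rightarrow> 'a \<Rightarrow> real) set set" where
  "ulip U M d z = ulip_class U M d z ` linf_lip M d z"

definition ulip_norm :: "'i filter \<Rightarrow> ('i \<Rightarrow> 'a set) \<Rightarrow> ('i \<Rightarrow> 'a \<Rightarrow> 'a \<Rightarrow> real) \<Rightarrow> ('i \<Rightarrow> 'a \<Rightarrow> real) set \<Rightarrow> real" where
  "ulip_norm U M d X = Lim U (\<lambda>i. lipnorm (M i) (d i) ((SOME F. F \<in> X) i))"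

definition Top :: "'i filter \<Rightarrow> ('i \<Rightarrow> 'a set) \<Rightarrow> ('i \<Rightarrow> 'a \<Rightarrow> 'a \<Rightarrow> real) \<Rightarrow> ('i \<Rightarrow> 'a) \<Rightarrow>
    ('i \<Rightarrow> 'a \<Rightarrow> real) set \<Rightarrow> ('i \<Rightarrow> 'a) set \<Rightarrow> real" where
  "Top U M d z X p = (if X \<in> ulip U M d z \<and> p \<in> upts U M d z
      then Lim U (\<lambda>i. (SOME F. F \<in> X) i ((SOME x. x \<in> p) i)) else 0)"

end

theory Submission
  imports Defs
begin

(* Bounded real families converge along an ultrafilter, and a uniform Lipschitz bound passes
   to the limit; this makes T well defined, linear and of norm at most one. For the norming
   property, an element of the free space is within e of a finite combination of point
   evaluations, so it suffices that every f in the unit ball of Lip0 of the ultraproduct agrees,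
   at any finitely many points, with some T X of norm at most one. Such an X is obtained
   coordinatewise from McShane's extension formula. *)

lemma ultrafilter_tendsto_Lim:
  fixes f :: "'i \<Rightarrow> real"
  assumes U: "is_ultrafilter U" and bounded: "\<And>i. \<bar>f i\<bar> \<le> C"
  shows "(f \<longlongrightarrow> Lim U f) U"
proof -
  have nontrivial: "U \<noteq> bot"
    using U by (simp add: is_ultrafilter_def)
  have "eventually (\<lambda>y. y \<in> {-C..C}) (filtermap f U)"
    unfolding eventually_filtermap using bounded
    by (intro always_eventually allI) (simp add: abs_le_iff minus_le_iff)
  moreover have "filtermap f U \<noteq> bot"
    using nontrivial by (simp add: filtermap_bot_iff)
  ultimately obtain l where l: "inf (nhds l) (filtermap f U) \<noteq> bot"
    using compact_filter[of "{-C..C}"] by auto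
  have "(f \<longlongrightarrow> l) U"
  proof (rule topological_tendstoI)
    fix S assume S: "open S" "l \<in> S"
    show "eventually (\<lambda>i. f i \<in> S) U"
    proof (rule ccontr)
      assume "\<not> eventually (\<lambda>i. f i \<in> S) U"
      then have "eventually (\<lambda>i. i \<notin> f -` S) U"
        using U unfolding is_ultrafilter_def by (metis (mono_tags, lifting) eventually_mono vimage_eq)
      then have "eventually (\<lambda>y. y \<notin> S) (filtermap f U)"
        by (simp add: eventually_filtermap)
      moreover have "eventually (\<lambda>y. y \<in> S) (nhds l)"
        using S eventually_nhds by blast
      ultimately have "eventually (\<lambda>_. False) (inf (nhds l) (filtermap f U))"
        unfolding eventually_inf by blast
      with l show False
        by (simp add: trivial_limit_def)
    qed
  qed
  then show ?thesis
    using nontrivial by (simp add: tendsto_Lim)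
qed

lemma Min_image_diff_le:
  fixes h h' :: "'k \<Rightarrow> real"
  assumes K: "finite K" "K \<noteq> {}" and close: "\<And>k. k \<in> K \<Longrightarrow> \<bar>h k - h' k\<bar> \<le> t"
  shows "\<bar>Min (h ` K) - Min (h' ` K)\<bar> \<le> t"
proof -
  have Min_le: "Min (g ` K) \<le> Min (g' ` K) + t" if "\<And>k. k \<in> K \<Longrightarrow> g k \<le> g' k + t"
    for g g' :: "'k \<Rightarrow> real"
  proof -
    obtain k where "k \<in> K" "Min (g' ` K) = g' k"
      using Min_in[of "g' ` K"] K by blast
    moreover have "Min (g ` K) \<le> g k"
      using K \<open>k \<in> K\<close> by simp
    ultimately show ?thesis
      using that by fastforce
  qed
  have "Min (h ` K) \<le> Min (h' ` K) + t" "Min (h' ` K) \<le> Min (h ` K) + t"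
    using close by (intro Min_le; force simp: abs_le_iff)+
  then show ?thesis
    by linarith
qed

lemma tendsto_Min_image:
  fixes h :: "'k \<Rightarrow> 'i \<Rightarrow> real"
  assumes "finite K" "K \<noteq> {}" "\<And>k. k \<in> K \<Longrightarrow> (h k \<longlongrightarrow> l k) F"
  shows "((\<lambda>i. Min ((\<lambda>k. h k i) ` K)) \<longlongrightarrow> Min (l ` K)) F"
  using assms
proof (induction K rule: finite_ne_induct)
  case (insert k K)
  then show ?case
    by (simp add: tendsto_min)
qed simp

section \<open>Lipschitz constants\<close>

definition lipschitz_with :: "'a set \<Rightarrow> ('a \<Rightarrow> 'a \<Rightarrow> real) \<Rightarrow> real \<Rightarrow> ('a \<Rightarrow> real) \<Rightarrow> bool" where
  "lipschitz_with A dd L f \<longleftrightarrow> (\<forall>x\<in>A. \<forall>y\<in>A. \<bar>f x - f y\<bar> \<le> L * dd x y)"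

lemma Lip0_imp_lipschitz_with: "f \<in> Lip0 A dd a \<Longrightarrow> \<exists>L. lipschitz_with A dd L f"
  unfolding Lip0_def lipschitz_with_def by blast

lemma lipschitz_with_quotient_le:
  assumes "lipschitz_with A dd L f" "x \<in> A" "y \<in> A"
  shows "\<bar>f x - f y\<bar> / dd x y \<le> max 0 L"
proof (cases "dd x y > 0")
  case True
  then show ?thesis
    using assms by (simp add: lipschitz_with_def pos_divide_le_eq le_max_iff_disj)
next
  case False
  then show ?thesis
    by (simp add: divide_nonneg_nonpos le_max_iff_disj)
qed

lemma lipnorm_bdd_above:
  assumes "lipschitz_with A dd L f"
  shows "bdd_above (insert 0 {\<bar>f x - f y\<bar> / dd x y | x y. x \<in> A \<and> y \<in> A \<and> x \<noteq> y})"
  using lipschitz_with_quotient_le[OF assms] by (auto intro!: bdd_aboveI[where M = "max 0 L"])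

lemma lipnorm_nonneg: "lipschitz_with A dd L f \<Longrightarrow> 0 \<le> lipnorm A dd f"
  unfolding lipnorm_def by (rule cSup_upper[OF _ lipnorm_bdd_above]) auto

lemma lipnorm_le: "lipschitz_with A dd L f \<Longrightarrow> 0 \<le> L \<Longrightarrow> lipnorm A dd f \<le> L"
  unfolding lipnorm_def
  by (rule cSup_least) (auto dest: lipschitz_with_quotient_le)

lemma lipschitz_with_lipnorm:
  assumes f: "lipschitz_with A dd L f" and nonneg: "\<And>x y. x \<in> A \<Longrightarrow> y \<in> A \<Longrightarrow> 0 \<le> dd x y"
  shows "lipschitz_with A dd (lipnorm A dd f) f"
  unfolding lipschitz_with_def
proof (intro ballI)
  fix x y assume xy: "x \<in> A" "y \<in> A"
  show "\<bar>f x - f y\<bar> \<le> lipnorm A dd f * dd x y"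
  proof (cases "x \<noteq> y \<and> dd x y > 0")
    case True
    have "\<bar>f x - f y\<bar> / dd x y \<le> lipnorm A dd f"
      unfolding lipnorm_def by (rule cSup_upper[OF _ lipnorm_bdd_above[OF f]]) (use xy True in blast)
    then show ?thesis
      using True by (simp add: divide_le_eq)
  next
    case False
    then have "dd x y = 0 \<or> x = y"
      using nonneg[OF xy] by linarith
    then show ?thesis
      using f xy lipnorm_nonneg[OF f] nonneg[OF xy] unfolding lipschitz_with_def by force
  qed
qed

lemma lipschitz_with_lipnorm_le:
  assumes "f \<in> Lip0 A dd a" "lipnorm A dd f \<le> L" "\<And>x y. x \<in> A \<Longrightarrow> y \<in> A \<Longrightarrow> 0 \<le> dd x y"
  shows "lipschitz_with A dd L f"
proof -
  obtain L0 where "lipschitz_with A dd L0 f"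
    using Lip0_imp_lipschitz_with[OF assms(1)] by blast
  then have "lipschitz_with A dd (lipnorm A dd f) f"
    using lipschitz_with_lipnorm assms(3) by blast
  then show ?thesis
    unfolding lipschitz_with_def
    by (meson assms(2,3) mult_right_mono order_trans)
qed

lemma lipschitz_with_lincomb:
  assumes "lipschitz_with A dd L f" "lipschitz_with A dd L' g"
  shows "lipschitz_with A dd (\<bar>a\<bar> * L + \<bar>b\<bar> * L') (\<lambda>x. a * f x + b * g x)"
  unfolding lipschitz_with_def
proof (intro ballI)
  fix x y assume xy: "x \<in> A" "y \<in> A"
  have "\<bar>(a * f x + b * g x) - (a * f y + b * g y)\<bar> \<le> \<bar>a\<bar> * \<bar>f x - f y\<bar> + \<bar>b\<bar> * \<bar>g x - g y\<bar>"
    by (metis abs_mult abs_triangle_ineq add_diff_add right_diff_distrib)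
  also have "\<dots> \<le> \<bar>a\<bar> * (L * dd x y) + \<bar>b\<bar> * (L' * dd x y)"
    using assms xy unfolding lipschitz_with_def by (intro add_mono mult_left_mono) auto
  finally show "\<bar>(a * f x + b * g x) - (a * f y + b * g y)\<bar> \<le> (\<bar>a\<bar> * L + \<bar>b\<bar> * L') * dd x y"
    by (simp add: algebra_simps)
qed

lemma lipschitz_with_diff:
  assumes "lipschitz_with A dd L f" "lipschitz_with A dd L' g"
  shows "lipschitz_with A dd (L + L') (\<lambda>x. f x - g x)"
  using lipschitz_with_lincomb[OF assms, where a = 1 and b = "-1"] by simp

lemma lipnorm_zero: "lipnorm A dd (\<lambda>_. 0) = 0"
proof -
  have "lipschitz_with A dd 0 (\<lambda>_. 0)"
    by (simp add: lipschitz_with_def)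
  then show ?thesis
    using lipnorm_le lipnorm_nonneg by (metis order_refl order_antisym)
qed

lemma Lip0_lincomb:
  assumes "f \<in> Lip0 A dd p" "g \<in> Lip0 A dd p"
  shows "(\<lambda>x. a * f x + b * g x) \<in> Lip0 A dd p"
  using assms lipschitz_with_lincomb[of A dd _ f _ g a b]
  unfolding Lip0_def lipschitz_with_def[symmetric] by auto

lemma lipnorm_lincomb_le:
  assumes "lipschitz_with A dd L f" "lipschitz_with A dd L' g"
    and "\<And>x y. x \<in> A \<Longrightarrow> y \<in> A \<Longrightarrow> 0 \<le> dd x y"
  shows "lipnorm A dd (\<lambda>x. a * f x + b * g x) \<le> \<bar>a\<bar> * lipnorm A dd f + \<bar>b\<bar> * lipnorm A dd g"
proof -
  have "0 \<le> lipnorm A dd f" "0 \<le> lipnorm A dd g"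
    using lipnorm_nonneg[OF assms(1)] lipnorm_nonneg[OF assms(2)] .
  then show ?thesis
    by (intro lipnorm_le lipschitz_with_lincomb lipschitz_with_lipnorm[OF assms(1,3)]
        lipschitz_with_lipnorm[OF assms(2,3)]) auto
qed

lemma lipnorm_diff_le:
  assumes "lipschitz_with A dd L f" "lipschitz_with A dd L' g"
    and "\<And>x y. x \<in> A \<Longrightarrow> y \<in> A \<Longrightarrow> 0 \<le> dd x y"
  shows "lipnorm A dd (\<lambda>x. f x - g x) \<le> lipnorm A dd f + lipnorm A dd g"
  using lipnorm_lincomb_le[OF assms, of 1 "-1"] by simp

section \<open>Norming subsets of Lip0 for the free space\<close>

lemma abs_le_dualnorm:
  assumes "\<And>h. h \<in> Lip0 A dd a \<Longrightarrow> lipnorm A dd h \<le> 1 \<Longrightarrow> \<bar>\<psi> h\<bar> \<le> B"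
    and "f \<in> Lip0 A dd a" "lipnorm A dd f \<le> 1"
  shows "\<bar>\<psi> f\<bar> \<le> dualnorm A dd a \<psi>"
  unfolding dualnorm_def using assms by (intro cSup_upper bdd_aboveI[where M = B]) auto

lemma abs_delta_sum_le:
  assumes nonneg: "\<And>x y. x \<in> A \<Longrightarrow> y \<in> A \<Longrightarrow> 0 \<le> dd x y" and "a \<in> A" "x ` S \<subseteq> A"
    and h: "h \<in> Lip0 A dd a" "lipnorm A dd h \<le> 1"
  shows "\<bar>\<Sum>k\<in>S. c k * delta A dd a (x k) h\<bar> \<le> (\<Sum>k\<in>S. \<bar>c k\<bar> * dd (x k) a)"
proof -
  have "lipschitz_with A dd 1 h"
    using lipschitz_with_lipnorm_le[OF h nonneg] .
  moreover have "h a = 0"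
    using h(1) by (simp add: Lip0_def)
  ultimately have "\<bar>h (x k)\<bar> \<le> dd (x k) a" if "k \<in> S" for k
    using assms(2,3) that unfolding lipschitz_with_def by (metis diff_zero image_subset_iff mult_1)
  then have "(\<Sum>k\<in>S. \<bar>c k * delta A dd a (x k) h\<bar>) \<le> (\<Sum>k\<in>S. \<bar>c k\<bar> * dd (x k) a)"
    using h(1) by (intro sum_mono) (simp add: delta_def abs_mult mult_left_mono)
  then show ?thesis
    by (rule order_trans[OF sum_abs])
qed

lemma abs_diff_less_if_agree_on_deltas:
  assumes nonneg: "\<And>x y. x \<in> A \<Longrightarrow> y \<in> A \<Longrightarrow> 0 \<le> dd x y"
    and points: "a \<in> A" "x ` S \<subseteq> A"
    and bounded: "\<And>h. h \<in> Lip0 A dd a \<Longrightarrow> lipnorm A dd h \<le> 1 \<Longrightarrow> \<bar>\<phi> h\<bar> \<le> B"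
    and close: "dualnorm A dd a (\<lambda>h. \<phi> h - (\<Sum>k\<in>S. c k * delta A dd a (x k) h)) < e"
    and f: "f \<in> Lip0 A dd a" "lipnorm A dd f \<le> 1"
    and g: "g \<in> Lip0 A dd a" "lipnorm A dd g \<le> 1"
    and agree: "\<And>k. k \<in> S \<Longrightarrow> g (x k) = f (x k)"
  shows "\<bar>\<phi> f - \<phi> g\<bar> < 2 * e"
proof -
  let ?\<psi> = "\<lambda>h. \<phi> h - (\<Sum>k\<in>S. c k * delta A dd a (x k) h)"
  have "\<bar>?\<psi> h\<bar> \<le> B + (\<Sum>k\<in>S. \<bar>c k\<bar> * dd (x k) a)"
    if "h \<in> Lip0 A dd a" "lipnorm A dd h \<le> 1" for h
    using bounded[OF that] abs_delta_sum_le[OF nonneg points that, of c] by linarith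
  then have "\<bar>?\<psi> f\<bar> \<le> dualnorm A dd a ?\<psi>" "\<bar>?\<psi> g\<bar> \<le> dualnorm A dd a ?\<psi>"
    by (rule abs_le_dualnorm; use f g in simp)+
  then have "\<bar>?\<psi> f\<bar> < e" "\<bar>?\<psi> g\<bar> < e"
    using close by linarith+
  moreover have "(\<Sum>k\<in>S. c k * delta A dd a (x k) f) = (\<Sum>k\<in>S. c k * delta A dd a (x k) g)"
    using f(1) g(1) agree by (intro sum.cong) (simp_all add: delta_def)
  ultimately show ?thesis
    by linarith
qed

lemma norming_1_if_interpolating:
  assumes nonneg: "\<And>x y. x \<in> A \<Longrightarrow> y \<in> A \<Longrightarrow> 0 \<le> dd x y" and "a \<in> A"
    and interpolating: "\<And>f (S :: nat set) x. f \<in> Lip0 A dd a \<Longrightarrow> lipnorm A dd f \<le> 1 \<Longrightarrow>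
      finite S \<Longrightarrow> x ` S \<subseteq> A \<Longrightarrow>
      \<exists>g\<in>\<Phi>. g \<in> Lip0 A dd a \<and> lipnorm A dd g \<le> 1 \<and> (\<forall>k\<in>S. g (x k) = f (x k))"
  shows "norming 1 \<Phi> A dd a"
  unfolding norming_def
proof
  fix \<phi> assume \<phi>: "\<phi> \<in> lip_free_space A dd a"
  then have "\<phi> \<in> Lip0_dual A dd a"
    unfolding lip_free_space_def mem_Collect_eq by (rule conjunct1)
  then obtain C where C: "\<forall>f\<in>Lip0 A dd a. \<bar>\<phi> f\<bar> \<le> C * lipnorm A dd f"
    unfolding Lip0_dual_def mem_Collect_eq by (elim conjE exE)
  have bounded: "\<bar>\<phi> h\<bar> \<le> \<bar>C\<bar>" if "h \<in> Lip0 A dd a" "lipnorm A dd h \<le> 1" for h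
  proof -
    have "0 \<le> lipnorm A dd h"
      using Lip0_imp_lipschitz_with[OF that(1)] lipnorm_nonneg by blast
    then have "C * lipnorm A dd h \<le> \<bar>C\<bar> * 1"
      by (rule mult_mono[OF abs_ge_self that(2) abs_ge_zero])
    then show ?thesis
      using C that(1) by fastforce
  qed
  let ?values = "{\<bar>\<phi> f\<bar> |f. f \<in> \<Phi> \<and> f \<in> Lip0 A dd a \<and> lipnorm A dd f \<le> 1}"
  have values_bdd: "bdd_above ?values"
    using bounded by (auto intro!: bdd_aboveI[where M = "\<bar>C\<bar>"])
  have "\<bar>\<phi> f\<bar> \<le> Sup ?values" if f: "f \<in> Lip0 A dd a" "lipnorm A dd f \<le> 1" for f
  proof (rule field_le_epsilon)
    fix e :: real assume "0 < e"
    have approx: "\<forall>e>0. \<exists>(S :: nat set) c x. finite S \<and> x ` S \<subseteq> A \<and>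
        dualnorm A dd a (\<lambda>h. \<phi> h - (\<Sum>k\<in>S. c k * delta A dd a (x k) h)) < e"
      using \<phi> unfolding lip_free_space_def mem_Collect_eq by (rule conjunct2)
    obtain S :: "nat set" and c x where S: "finite S" "x ` S \<subseteq> A"
      and close: "dualnorm A dd a (\<lambda>h. \<phi> h - (\<Sum>k\<in>S. c k * delta A dd a (x k) h)) < e / 2"
      using approx[rule_format, OF half_gt_zero[OF \<open>0 < e\<close>]] by iprover
    obtain g where g: "g \<in> \<Phi>" "g \<in> Lip0 A dd a" "lipnorm A dd g \<le> 1" "\<forall>k\<in>S. g (x k) = f (x k)"
      using interpolating[OF f S] by meson
    have "\<bar>\<phi> f - \<phi> g\<bar> < 2 * (e / 2)"
      using abs_diff_less_if_agree_on_deltas[OF nonneg \<open>a \<in> A\<close> S(2) bounded close f g(2,3)] g(4)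
      by blast
    moreover have "\<bar>\<phi> g\<bar> \<le> Sup ?values"
      using g by (intro cSup_upper[OF _ values_bdd]) blast
    ultimately show "\<bar>\<phi> f\<bar> \<le> Sup ?values + e"
      by linarith
  qed
  moreover have "(\<lambda>_. 0) \<in> Lip0 A dd a"
    unfolding Lip0_def by (auto intro: exI[of _ 0])
  moreover have "lipnorm A dd (\<lambda>_. 0) \<le> 1"
    by (simp add: lipnorm_zero)
  ultimately have "dualnorm A dd a \<phi> \<le> Sup ?values"
    unfolding dualnorm_def by (intro cSup_least) blast+
  then show "dualnorm A dd a \<phi> / 1 \<le> Sup ?values"
    by simp
qed

section \<open>Ultraproducts of pointed metric spaces\<close>

locale pointed_ultraproduct =
  fixes U :: "'i filter" and M :: "'i \<Rightarrow> 'a set" and d :: "'i \<Rightarrow> 'a \<Rightarrow> 'a \<Rightarrow> real"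
    and z :: "'i \<Rightarrow> 'a"
  assumes ultrafilter: "is_ultrafilter U"
    and metric: "\<And>i. Metric_space (M i) (d i)"
    and base_in: "\<And>i. z i \<in> M i"
begin

lemma nontrivial: "U \<noteq> bot"
  using ultrafilter by (simp add: is_ultrafilter_def)

lemmas tendsto_Lim_bounded = ultrafilter_tendsto_Lim[OF ultrafilter]

lemma d_nonneg: "0 \<le> d i x y"
  by (rule Metric_space.nonneg[OF metric])

lemma d_commute: "d i x y = d i y x"
  by (rule Metric_space.commute[OF metric])

lemma d_self: "x \<in> M i \<Longrightarrow> d i x x = 0"
  by (rule Metric_space.mdist_zero[OF metric])

lemma d_triangle: "x \<in> M i \<Longrightarrow> y \<in> M i \<Longrightarrow> w \<in> M i \<Longrightarrow> d i x w \<le> d i x y + d i y w"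
  by (rule Metric_space.triangle[OF metric])

lemma d_diff_le: "x \<in> M i \<Longrightarrow> y \<in> M i \<Longrightarrow> w \<in> M i \<Longrightarrow> \<bar>d i x w - d i y w\<bar> \<le> d i x y"
  using Metric_space.mdist_reverse_triangle[OF metric, of x i w y] by (simp add: d_commute)

lemma linf_pts_in: "x \<in> linf_pts M d z \<Longrightarrow> x i \<in> M i"
  unfolding linf_pts_def by blast

lemma linf_pts_bounded: "x \<in> linf_pts M d z \<Longrightarrow> \<exists>C. \<forall>i. d i (x i) (z i) \<le> C"
  unfolding linf_pts_def by blast

lemma base_linf_pts: "z \<in> linf_pts M d z"
  unfolding linf_pts_def using base_in d_self by auto

lemma tendsto_upseudo:
  assumes x: "x \<in> linf_pts M d z" and y: "y \<in> linf_pts M d z"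
  shows "((\<lambda>i. d i (x i) (y i)) \<longlongrightarrow> upseudo U d x y) U"
proof -
  obtain Cx Cy where "\<forall>i. d i (x i) (z i) \<le> Cx" "\<forall>i. d i (y i) (z i) \<le> Cy"
    using linf_pts_bounded x y by metis
  moreover have "d i (x i) (y i) \<le> d i (x i) (z i) + d i (y i) (z i)" for i
    using d_triangle[OF linf_pts_in[OF x] base_in linf_pts_in[OF y]] d_commute by metis
  ultimately have "\<bar>d i (x i) (y i)\<bar> \<le> Cx + Cy" for i
    using d_nonneg by (smt (verit))
  then show ?thesis
    unfolding upseudo_def by (rule tendsto_Lim_bounded)
qed

lemma upseudo_nonneg: "x \<in> linf_pts M d z \<Longrightarrow> y \<in> linf_pts M d z \<Longrightarrow> 0 \<le> upseudo U d x y"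
  using tendsto_lowerbound[OF tendsto_upseudo _ nontrivial] d_nonneg by (simp add: always_eventually)

lemma upseudo_commute: "upseudo U d x y = upseudo U d y x"
  unfolding upseudo_def by (simp add: d_commute)

lemma upseudo_self: "x \<in> linf_pts M d z \<Longrightarrow> upseudo U d x x = 0"
  unfolding upseudo_def using nontrivial by (simp add: d_self linf_pts_in tendsto_Lim)

lemma upseudo_triangle:
  assumes "x \<in> linf_pts M d z" "y \<in> linf_pts M d z" "w \<in> linf_pts M d z"
  shows "upseudo U d x w \<le> upseudo U d x y + upseudo U d y w"
  using assms
  by (intro tendsto_le[OF nontrivial tendsto_add[OF tendsto_upseudo tendsto_upseudo] tendsto_upseudo])
     (auto intro!: always_eventually d_triangle linf_pts_in)

lemma upseudo_cong:
  assumes "x \<in> linf_pts M d z" "y \<in> linf_pts M d z" "w \<in> linf_pts M d z" "upseudo U d x y = 0"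
  shows "upseudo U d x w = upseudo U d y w"
  using upseudo_triangle[OF assms(1,2,3)] upseudo_triangle[OF assms(2,1,3)] assms(4)
  by (simp add: upseudo_commute[of y x])

lemma upt_class_self: "x \<in> linf_pts M d z \<Longrightarrow> x \<in> upt_class U M d z x"
  unfolding upt_class_def by (simp add: upseudo_self)

lemma upts_cases:
  assumes "p \<in> upts U M d z"
  obtains x where "x \<in> linf_pts M d z" "p = upt_class U M d z x"
  using assms unfolding upts_def by blast

lemma udist_upt_class:
  assumes x: "x \<in> linf_pts M d z" and y: "y \<in> linf_pts M d z"
  shows "udist U d (upt_class U M d z x) (upt_class U M d z y) = upseudo U d x y"
proof -
  define x' where "x' = (SOME x'. x' \<in> upt_class U M d z x)"
  define y' where "y' = (SOME y'. y' \<in> upt_class U M d z y)"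
  have "x' \<in> upt_class U M d z x" "y' \<in> upt_class U M d z y"
    unfolding x'_def y'_def using upt_class_self[OF x] upt_class_self[OF y]
    by (auto simp: some_in_eq)
  then have rep_x: "x' \<in> linf_pts M d z" "upseudo U d x x' = 0"
    and rep_y: "y' \<in> linf_pts M d z" "upseudo U d y y' = 0"
    unfolding upt_class_def by auto
  have "udist U d (upt_class U M d z x) (upt_class U M d z y) = upseudo U d x' y'"
    unfolding udist_def x'_def y'_def ..
  also have "\<dots> = upseudo U d x y'"
    using upseudo_cong[OF x rep_x(1) rep_y(1) rep_x(2)] ..
  also have "\<dots> = upseudo U d y x"
    using upseudo_cong[OF y rep_y(1) x rep_y(2)] by (simp add: upseudo_commute)
  finally show ?thesis
    by (simp add: upseudo_commute)
qed

lemma udist_nonneg: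
  assumes "p \<in> upts U M d z" "q \<in> upts U M d z"
  shows "0 \<le> udist U d p q"
proof -
  obtain x y where "x \<in> linf_pts M d z" "p = upt_class U M d z x"
    and "y \<in> linf_pts M d z" "q = upt_class U M d z y"
    using upts_cases assms by metis
  then show ?thesis
    by (simp add: udist_upt_class upseudo_nonneg)
qed

lemma ubase_in_upts: "ubase U M d z \<in> upts U M d z"
  unfolding ubase_def upts_def using base_linf_pts by blast

lemma linf_lip_Lip0: "F \<in> linf_lip M d z \<Longrightarrow> F i \<in> Lip0 (M i) (d i) (z i)"
  unfolding linf_lip_def by blast

lemma linf_lip_bounded: "F \<in> linf_lip M d z \<Longrightarrow> \<exists>C. \<forall>i. lipnorm (M i) (d i) (F i) \<le> C"
  unfolding linf_lip_def by blast

lemma linf_lip_base: "F \<in> linf_lip M d z \<Longrightarrow> F i (z i) = 0"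
  using linf_lip_Lip0 unfolding Lip0_def by blast

lemma linf_lip_lipschitz:
  "F \<in> linf_lip M d z \<Longrightarrow> lipschitz_with (M i) (d i) (lipnorm (M i) (d i) (F i)) (F i)"
  using linf_lip_Lip0 d_nonneg by (blast intro: lipschitz_with_lipnorm_le)

lemma linf_lip_lipnorm_nonneg: "F \<in> linf_lip M d z \<Longrightarrow> 0 \<le> lipnorm (M i) (d i) (F i)"
  using linf_lip_lipschitz lipnorm_nonneg by blast

lemma linf_lip_values_bounded:
  assumes F: "F \<in> linf_lip M d z" and x: "x \<in> linf_pts M d z"
  shows "\<exists>C. \<forall>i. \<bar>F i (x i)\<bar> \<le> C"
proof -
  obtain CF Cx where CF: "\<forall>i. lipnorm (M i) (d i) (F i) \<le> CF" and Cx: "\<forall>i. d i (x i) (z i) \<le> Cx"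
    using linf_lip_bounded[OF F] linf_pts_bounded[OF x] by blast
  have "\<bar>F i (x i)\<bar> \<le> lipnorm (M i) (d i) (F i) * d i (x i) (z i)" for i
    using linf_lip_lipschitz[OF F] linf_lip_base[OF F] linf_pts_in[OF x] base_in
    unfolding lipschitz_with_def by (metis diff_zero)
  also have "\<dots> i \<le> CF * Cx" for i
  proof (rule mult_mono)
    show "0 \<le> CF"
      using CF linf_lip_lipnorm_nonneg[OF F] by (meson dual_order.trans)
  qed (use CF Cx d_nonneg in auto)
  finally show ?thesis
    by blast
qed

lemma linf_lip_lincomb:
  assumes F: "F \<in> linf_lip M d z" and G: "G \<in> linf_lip M d z"
  shows "(\<lambda>i x. a * F i x + b * G i x) \<in> linf_lip M d z"
proof -
  obtain CF CG where CF: "\<forall>i. lipnorm (M i) (d i) (F i) \<le> CF"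
    and CG: "\<forall>i. lipnorm (M i) (d i) (G i) \<le> CG"
    using linf_lip_bounded F G by metis
  have "lipnorm (M i) (d i) (\<lambda>x. a * F i x + b * G i x)
      \<le> \<bar>a\<bar> * lipnorm (M i) (d i) (F i) + \<bar>b\<bar> * lipnorm (M i) (d i) (G i)" for i
    by (rule lipnorm_lincomb_le[OF linf_lip_lipschitz[OF F] linf_lip_lipschitz[OF G] d_nonneg])
  also have "\<dots> i \<le> \<bar>a\<bar> * CF + \<bar>b\<bar> * CG" for i
    using CF CG by (intro add_mono mult_left_mono) auto
  finally have "\<exists>C. \<forall>i. lipnorm (M i) (d i) (\<lambda>x. a * F i x + b * G i x) \<le> C"
    by blast
  moreover have "(\<lambda>x. a * F i x + b * G i x) \<in> Lip0 (M i) (d i) (z i)" for i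
    by (rule Lip0_lincomb[OF linf_lip_Lip0[OF F] linf_lip_Lip0[OF G]])
  ultimately show ?thesis
    unfolding linf_lip_def by blast
qed

section \<open>The operator T\<close>

lemma ulip_class_self: "F \<in> linf_lip M d z \<Longrightarrow> F \<in> ulip_class U M d z F"
  unfolding ulip_class_def using nontrivial by (simp add: lipnorm_zero tendsto_Lim)

lemma ulip_class_linf_lip: "G \<in> ulip_class U M d z F \<Longrightarrow> G \<in> linf_lip M d z"
  unfolding ulip_class_def by blast

lemma ulip_class_tendsto:
  assumes F: "F \<in> linf_lip M d z" and G: "G \<in> ulip_class U M d z F"
  shows "((\<lambda>i. lipnorm (M i) (d i) (\<lambda>x. F i x - G i x)) \<longlongrightarrow> 0) U"
proof -
  have G': "G \<in> linf_lip M d z"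
    using G by (rule ulip_class_linf_lip)
  obtain CF CG where CF: "\<forall>i. lipnorm (M i) (d i) (F i) \<le> CF"
    and CG: "\<forall>i. lipnorm (M i) (d i) (G i) \<le> CG"
    using linf_lip_bounded F G' by metis
  have "\<bar>lipnorm (M i) (d i) (\<lambda>x. F i x - G i x)\<bar> \<le> CF + CG" for i
    using lipnorm_diff_le[OF linf_lip_lipschitz[OF F, of i] linf_lip_lipschitz[OF G', of i] d_nonneg]
      lipnorm_nonneg[OF lipschitz_with_diff[OF linf_lip_lipschitz[OF F, of i] linf_lip_lipschitz[OF G', of i]]]
      CF CG by (smt (verit))
  then have "((\<lambda>i. lipnorm (M i) (d i) (\<lambda>x. F i x - G i x))
      \<longlongrightarrow> Lim U (\<lambda>i. lipnorm (M i) (d i) (\<lambda>x. F i x - G i x))) U"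
    by (rule tendsto_Lim_bounded)
  moreover have "Lim U (\<lambda>i. lipnorm (M i) (d i) (\<lambda>x. F i x - G i x)) = 0"
    using G unfolding ulip_class_def by blast
  ultimately show ?thesis
    by simp
qed

lemma ulip_cases:
  assumes "X \<in> ulip U M d z"
  obtains F where "F \<in> linf_lip M d z" "X = ulip_class U M d z F"
  using assms unfolding ulip_def by blast

lemma some_in_ulip_class:
  "F \<in> linf_lip M d z \<Longrightarrow> (SOME G. G \<in> ulip_class U M d z F) \<in> ulip_class U M d z F"
  using ulip_class_self by (auto simp: some_in_eq)

lemma tendsto_ulip_norm:
  assumes F: "F \<in> linf_lip M d z"
  defines "G \<equiv> SOME G. G \<in> ulip_class U M d z F"
  shows "((\<lambda>i. lipnorm (M i) (d i) (G i)) \<longlongrightarrow> ulip_norm U M d (ulip_class U M d z F)) U"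
proof -
  have G: "G \<in> linf_lip M d z"
    unfolding G_def using some_in_ulip_class[OF F] by (rule ulip_class_linf_lip)
  obtain C where "\<forall>i. lipnorm (M i) (d i) (G i) \<le> C"
    using linf_lip_bounded[OF G] by blast
  then have "\<bar>lipnorm (M i) (d i) (G i)\<bar> \<le> C" for i
    using linf_lip_lipnorm_nonneg[OF G, of i] by auto
  then show ?thesis
    unfolding ulip_norm_def G_def by (rule tendsto_Lim_bounded)
qed

text \<open>|F(x) - G(y)| \<le> |F(x) - F(y)| + |(F - G)(y) - (F - G)(z)|, and the two terms are at most
  L(F_i) d_i(x_i, y_i) and L(F_i - G_i) d_i(y_i, z_i), which both vanish along U.\<close>
lemma tendsto_values_diff:
  assumes F: "F \<in> linf_lip M d z" and G: "G \<in> ulip_class U M d z F"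
    and x: "x \<in> linf_pts M d z" and y: "y \<in> upt_class U M d z x"
  shows "((\<lambda>i. F i (x i) - G i (y i)) \<longlongrightarrow> 0) U"
proof -
  let ?D = "\<lambda>i. lipnorm (M i) (d i) (\<lambda>x. F i x - G i x)"
  have G': "G \<in> linf_lip M d z"
    using G by (rule ulip_class_linf_lip)
  have y': "y \<in> linf_pts M d z" and xy: "upseudo U d x y = 0"
    using y unfolding upt_class_def by auto
  obtain CF Cy where CF: "\<forall>i. lipnorm (M i) (d i) (F i) \<le> CF" and Cy: "\<forall>i. d i (y i) (z i) \<le> Cy"
    using linf_lip_bounded[OF F] linf_pts_bounded[OF y'] by blast
  have "((\<lambda>i. CF * d i (x i) (y i) + ?D i * Cy) \<longlongrightarrow> CF * 0 + 0 * Cy) U"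
    using tendsto_upseudo[OF x y'] ulip_class_tendsto[OF F G] xy
    by (intro tendsto_intros) auto
  then have limit: "((\<lambda>i. CF * d i (x i) (y i) + ?D i * Cy) \<longlongrightarrow> 0) U"
    by simp
  have "\<bar>F i (x i) - G i (y i)\<bar> \<le> CF * d i (x i) (y i) + ?D i * Cy" for i
  proof -
    have xi: "x i \<in> M i" and yi: "y i \<in> M i"
      using x y' by (auto intro: linf_pts_in)
    have FG: "lipschitz_with (M i) (d i) (?D i) (\<lambda>x. F i x - G i x)"
      using lipschitz_with_diff[OF linf_lip_lipschitz[OF F] linf_lip_lipschitz[OF G']]
      by (rule lipschitz_with_lipnorm) (rule d_nonneg)
    have "\<bar>F i (x i) - F i (y i)\<bar> \<le> CF * d i (x i) (y i)"
      using linf_lip_lipschitz[OF F] xi yi CF d_nonneg unfolding lipschitz_with_def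
      by (meson mult_right_mono order_trans)
    moreover have "\<bar>(F i (y i) - G i (y i)) - (F i (z i) - G i (z i))\<bar> \<le> ?D i * Cy"
      using FG yi base_in Cy lipnorm_nonneg[OF FG] unfolding lipschitz_with_def
      by (meson mult_left_mono order_trans)
    ultimately show ?thesis
      by (simp add: linf_lip_base[OF F] linf_lip_base[OF G'])
  qed
  then show ?thesis
    by (intro Lim_null_comparison[OF _ limit] always_eventually allI) simp
qed

lemma Top_tendsto:
  assumes F: "F \<in> linf_lip M d z" and G: "G \<in> ulip_class U M d z F"
    and x: "x \<in> linf_pts M d z" and y: "y \<in> upt_class U M d z x"
  shows "((\<lambda>i. G i (y i)) \<longlongrightarrow> Top U M d z (ulip_class U M d z F) (upt_class U M d z x)) U"
proof -
  define l where "l = Lim U (\<lambda>i. F i (x i))"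
  have Fx: "((\<lambda>i. F i (x i)) \<longlongrightarrow> l) U"
    unfolding l_def using linf_lip_values_bounded[OF F x] by (metis tendsto_Lim_bounded)
  have to_l: "((\<lambda>i. G i (y i)) \<longlongrightarrow> l) U"
    if "G \<in> ulip_class U M d z F" "y \<in> upt_class U M d z x" for G y
    using tendsto_diff[OF Fx tendsto_values_diff[OF F that(1) x that(2)]] by simp
  have "(SOME y. y \<in> upt_class U M d z x) \<in> upt_class U M d z x"
    using upt_class_self[OF x] by (auto simp: some_in_eq)
  then have "Top U M d z (ulip_class U M d z F) (upt_class U M d z x) = l"
    using F x nontrivial to_l[OF some_in_ulip_class[OF F]]
    unfolding Top_def ulip_def upts_def by (simp add: tendsto_Lim)
  then show ?thesis
    using to_l[OF G y] by simp
qed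

lemma Top_tendsto_self:
  "F \<in> linf_lip M d z \<Longrightarrow> x \<in> linf_pts M d z \<Longrightarrow>
    ((\<lambda>i. F i (x i)) \<longlongrightarrow> Top U M d z (ulip_class U M d z F) (upt_class U M d z x)) U"
  by (rule Top_tendsto[OF _ ulip_class_self _ upt_class_self])

lemma Top_lipschitz:
  assumes X: "X \<in> ulip U M d z"
  shows "lipschitz_with (upts U M d z) (udist U d) (ulip_norm U M d X) (Top U M d z X)"
  unfolding lipschitz_with_def
proof (intro ballI)
  fix p q assume p: "p \<in> upts U M d z" and q: "q \<in> upts U M d z"
  obtain F where F: "F \<in> linf_lip M d z" and XF: "X = ulip_class U M d z F"
    using ulip_cases[OF X] .
  obtain x y where x: "x \<in> linf_pts M d z" "p = upt_class U M d z x"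
    and y: "y \<in> linf_pts M d z" "q = upt_class U M d z y"
    using upts_cases p q by metis
  define G where "G = (SOME G. G \<in> ulip_class U M d z F)"
  have G: "G \<in> ulip_class U M d z F"
    unfolding G_def by (rule some_in_ulip_class[OF F])
  have Gx: "((\<lambda>i. G i (x i)) \<longlongrightarrow> Top U M d z X p) U"
    unfolding XF x(2) by (rule Top_tendsto[OF F G x(1) upt_class_self[OF x(1)]])
  have Gy: "((\<lambda>i. G i (y i)) \<longlongrightarrow> Top U M d z X q) U"
    unfolding XF y(2) by (rule Top_tendsto[OF F G y(1) upt_class_self[OF y(1)]])
  have bound_tendsto: "((\<lambda>i. lipnorm (M i) (d i) (G i) * d i (x i) (y i))
      \<longlongrightarrow> ulip_norm U M d X * udist U d p q) U"
    using tendsto_mult[OF tendsto_ulip_norm[OF F] tendsto_upseudo[OF x(1) y(1)]]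
    unfolding XF x(2) y(2) udist_upt_class[OF x(1) y(1)] G_def .
  have "\<bar>G i (x i) - G i (y i)\<bar> \<le> lipnorm (M i) (d i) (G i) * d i (x i) (y i)" for i
    using linf_lip_lipschitz[OF ulip_class_linf_lip[OF G], of i]
      linf_pts_in[OF x(1), of i] linf_pts_in[OF y(1), of i]
    unfolding lipschitz_with_def by blast
  then show "\<bar>Top U M d z X p - Top U M d z X q\<bar> \<le> ulip_norm U M d X * udist U d p q"
    by (intro tendsto_le[OF nontrivial bound_tendsto tendsto_rabs[OF tendsto_diff[OF Gx Gy]]]
        always_eventually allI)
qed

lemma ulip_norm_nonneg:
  assumes X: "X \<in> ulip U M d z"
  shows "0 \<le> ulip_norm U M d X"
proof -
  obtain F where F: "F \<in> linf_lip M d z" and XF: "X = ulip_class U M d z F"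
    using ulip_cases[OF X] .
  have "(SOME G. G \<in> ulip_class U M d z F) \<in> linf_lip M d z"
    using some_in_ulip_class[OF F] by (rule ulip_class_linf_lip)
  then show ?thesis
    unfolding XF using tendsto_ulip_norm[OF F] linf_lip_lipnorm_nonneg
    by (intro tendsto_lowerbound[OF _ _ nontrivial] always_eventually) auto
qed

lemma Top_Lip0:
  assumes X: "X \<in> ulip U M d z"
  shows "Top U M d z X \<in> Lip0 (upts U M d z) (udist U d) (ubase U M d z)"
proof -
  obtain F where F: "F \<in> linf_lip M d z" and XF: "X = ulip_class U M d z F"
    using ulip_cases[OF X] .
  have "((\<lambda>i. F i (z i)) \<longlongrightarrow> Top U M d z X (ubase U M d z)) U"
    unfolding XF ubase_def by (rule Top_tendsto_self[OF F base_linf_pts])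
  then have "((\<lambda>i. 0) \<longlongrightarrow> Top U M d z X (ubase U M d z)) U"
    by (simp add: linf_lip_base[OF F])
  then have "Top U M d z X (ubase U M d z) = 0"
    using tendsto_unique[OF nontrivial _ tendsto_const] by blast
  moreover have "Top U M d z X p = 0" if "p \<notin> upts U M d z" for p
    using that unfolding Top_def by simp
  ultimately show ?thesis
    using Top_lipschitz[OF X] unfolding Lip0_def lipschitz_with_def by blast
qed

lemma lipnorm_Top_le:
  "X \<in> ulip U M d z \<Longrightarrow> lipnorm (upts U M d z) (udist U d) (Top U M d z X) \<le> ulip_norm U M d X"
  by (rule lipnorm_le[OF Top_lipschitz ulip_norm_nonneg])

lemma Top_lincomb:
  assumes F: "F \<in> linf_lip M d z" and G: "G \<in> linf_lip M d z"
  shows "Top U M d z (ulip_class U M d z (\<lambda>i x. a * F i x + b * G i x))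
    = (\<lambda>p. a * Top U M d z (ulip_class U M d z F) p + b * Top U M d z (ulip_class U M d z G) p)"
proof
  fix p
  show "Top U M d z (ulip_class U M d z (\<lambda>i x. a * F i x + b * G i x)) p
    = a * Top U M d z (ulip_class U M d z F) p + b * Top U M d z (ulip_class U M d z G) p"
  proof (cases "p \<in> upts U M d z")
    case True
    then obtain x where x: "x \<in> linf_pts M d z" "p = upt_class U M d z x"
      by (rule upts_cases)
    show ?thesis
      unfolding x(2)
      using Top_tendsto_self[OF linf_lip_lincomb[OF F G] x(1)]
        tendsto_add[OF tendsto_mult_left[OF Top_tendsto_self[OF F x(1)]]
          tendsto_mult_left[OF Top_tendsto_self[OF G x(1)]]]
      by (rule tendsto_unique[OF nontrivial])
  next
    case False
    then show ?thesis
      unfolding Top_def by simp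
  qed
qed

lemma ulip_norm_le:
  assumes H: "H \<in> linf_lip M d z" and bound: "\<And>i. lipnorm (M i) (d i) (H i) \<le> B"
  shows "ulip_norm U M d (ulip_class U M d z H) \<le> B"
proof -
  define G where "G = (SOME G. G \<in> ulip_class U M d z H)"
  have "G \<in> ulip_class U M d z H"
    unfolding G_def by (rule some_in_ulip_class[OF H])
  then have G: "G \<in> linf_lip M d z"
    and close: "((\<lambda>i. lipnorm (M i) (d i) (\<lambda>x. H i x - G i x)) \<longlongrightarrow> 0) U"
    using ulip_class_linf_lip ulip_class_tendsto[OF H] by blast+
  have triangle: "lipnorm (M i) (d i) (G i)
      \<le> lipnorm (M i) (d i) (H i) + lipnorm (M i) (d i) (\<lambda>x. H i x - G i x)" for i
    using lipnorm_diff_le[OF linf_lip_lipschitz[OF H, of i]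
        lipschitz_with_diff[OF linf_lip_lipschitz[OF H, of i] linf_lip_lipschitz[OF G, of i]] d_nonneg]
    by simp
  have "lipnorm (M i) (d i) (G i) \<le> B + lipnorm (M i) (d i) (\<lambda>x. H i x - G i x)" for i
    using triangle[of i] bound[of i] by linarith
  then show ?thesis
    using tendsto_le[OF nontrivial tendsto_add_const_iff[THEN iffD2, OF close]
        tendsto_ulip_norm[OF H, folded G_def]]
    by (simp add: always_eventually)
qed

text \<open>McShane's formula g_i(y) = min_p (f(p) + d_i(y, r_p(i))) over the points p of K, applied to
  representatives r_p; K contains the base point so that g_i(z_i) tends to f(base) = 0.\<close>
lemma Top_interpolates:
  assumes f: "f \<in> Lip0 (upts U M d z) (udist U d) (ubase U M d z)"
    and f1: "lipnorm (upts U M d z) (udist U d) f \<le> 1"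
    and P: "finite P" "P \<subseteq> upts U M d z"
  shows "\<exists>X\<in>ulip U M d z. ulip_norm U M d X \<le> 1 \<and> (\<forall>p\<in>P. Top U M d z X p = f p)"
proof -
  define K where "K = insert (ubase U M d z) P"
  have K: "finite K" "K \<noteq> {}" "K \<subseteq> upts U M d z"
    using P ubase_in_upts unfolding K_def by auto
  have "\<forall>p\<in>K. \<exists>x. x \<in> linf_pts M d z \<and> p = upt_class U M d z x"
    using K(3) upts_cases by (metis subsetD)
  then obtain r where r: "\<And>p. p \<in> K \<Longrightarrow> r p \<in> linf_pts M d z \<and> p = upt_class U M d z (r p)"
    using bchoice by meson
  have f_lipschitz: "lipschitz_with (upts U M d z) (udist U d) 1 f"
    by (rule lipschitz_with_lipnorm_le[OF f f1 udist_nonneg])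
  define g where "g i y = Min ((\<lambda>p. f p + d i y (r p i)) ` K)" for i y
  define H where "H i y = (if y \<in> M i then g i y - g i (z i) else 0)" for i y
  have H_lipschitz: "lipschitz_with (M i) (d i) 1 (H i)" for i
    unfolding lipschitz_with_def
  proof (intro ballI)
    fix y y' assume yy': "y \<in> M i" "y' \<in> M i"
    have "\<bar>(f p + d i y (r p i)) - (f p + d i y' (r p i))\<bar> \<le> d i y y'" if "p \<in> K" for p
      using d_diff_le[OF yy'] r[OF that] linf_pts_in by simp
    then show "\<bar>H i y - H i y'\<bar> \<le> 1 * d i y y'"
      using Min_image_diff_le[OF K(1,2)] yy' unfolding H_def g_def by simp
  qed
  have "H i \<in> Lip0 (M i) (d i) (z i)" for i
    unfolding Lip0_def using H_lipschitz[of i] base_in[of i]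
    by (auto simp: H_def lipschitz_with_def[symmetric])
  moreover have H1: "lipnorm (M i) (d i) (H i) \<le> 1" for i
    by (rule lipnorm_le[OF H_lipschitz]) simp
  ultimately have H: "H \<in> linf_lip M d z"
    unfolding linf_lip_def by blast
  have g_tendsto: "((\<lambda>i. g i (y i)) \<longlongrightarrow> f q) U"
    if q: "q \<in> K" and y: "y \<in> linf_pts M d z" "q = upt_class U M d z y" for q y
  proof -
    have "((\<lambda>i. g i (y i)) \<longlongrightarrow> Min ((\<lambda>p. f p + udist U d q p) ` K)) U"
      unfolding g_def
    proof (rule tendsto_Min_image[OF K(1,2)])
      fix p assume "p \<in> K"
      then have "udist U d q p = upseudo U d y (r p)" and "r p \<in> linf_pts M d z"
        using r y udist_upt_class by metis+
      then show "((\<lambda>i. f p + d i (y i) (r p i)) \<longlongrightarrow> f p + udist U d q p) U"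
        by (simp add: tendsto_add tendsto_upseudo[OF y(1)])
    qed
    moreover have "Min ((\<lambda>p. f p + udist U d q p) ` K) = f q"
    proof (rule Min_eqI)
      have "udist U d q q = 0"
        using y udist_upt_class upseudo_self by simp
      then show "f q \<in> (\<lambda>p. f p + udist U d q p) ` K"
        using q by force
    next
      fix t assume "t \<in> (\<lambda>p. f p + udist U d q p) ` K"
      then show "f q \<le> t"
        using f_lipschitz q K(3) unfolding lipschitz_with_def by force
    qed (use K in simp)
    ultimately show ?thesis
      by simp
  qed
  have "Top U M d z (ulip_class U M d z H) p = f p" if "p \<in> P" for p
  proof -
    have p: "p \<in> K" and rp: "r p \<in> linf_pts M d z" "p = upt_class U M d z (r p)"
      using that r unfolding K_def by auto
    have "((\<lambda>i. H i (r p i)) \<longlongrightarrow> Top U M d z (ulip_class U M d z H) p) U"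
      using Top_tendsto_self[OF H rp(1)] rp(2) by simp
    moreover have "((\<lambda>i. g i (r p i) - g i (z i)) \<longlongrightarrow> f p - f (ubase U M d z)) U"
      using g_tendsto[OF p rp] g_tendsto[OF _ base_linf_pts ubase_def] K_def
      by (intro tendsto_diff) auto
    moreover have "H i (r p i) = g i (r p i) - g i (z i)" for i
      using linf_pts_in[OF rp(1)] unfolding H_def by simp
    moreover have "f (ubase U M d z) = 0"
      using f unfolding Lip0_def by blast
    ultimately show ?thesis
      using tendsto_unique[OF nontrivial] by fastforce
  qed
  moreover have "ulip_class U M d z H \<in> ulip U M d z"
    using H unfolding ulip_def by blast
  moreover have "ulip_norm U M d (ulip_class U M d z H) \<le> 1"
    by (rule ulip_norm_le[OF H H1])
  ultimately show ?thesis
    by blast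
qed

lemma norming_Top_unit_ball:
  "norming 1 (Top U M d z ` {X \<in> ulip U M d z. ulip_norm U M d X \<le> 1})
    (upts U M d z) (udist U d) (ubase U M d z)"
proof (rule norming_1_if_interpolating[OF udist_nonneg ubase_in_upts])
  fix f and S :: "nat set" and x
  assume f: "f \<in> Lip0 (upts U M d z) (udist U d) (ubase U M d z)"
    "lipnorm (upts U M d z) (udist U d) f \<le> 1" and S: "finite S" "x ` S \<subseteq> upts U M d z"
  obtain X where X: "X \<in> ulip U M d z" "ulip_norm U M d X \<le> 1"
    and agree: "\<forall>p\<in>x ` S. Top U M d z X p = f p"
    using Top_interpolates[OF f finite_imageI[OF S(1)] S(2)] by meson
  then show "\<exists>g\<in>Top U M d z ` {X \<in> ulip U M d z. ulip_norm U M d X \<le> 1}.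
      g \<in> Lip0 (upts U M d z) (udist U d) (ubase U M d z) \<and>
      lipnorm (upts U M d z) (udist U d) g \<le> 1 \<and> (\<forall>k\<in>S. g (x k) = f (x k))"
    using Top_Lip0[OF X(1)] lipnorm_Top_le[OF X(1)] by (intro bexI[of _ "Top U M d z X"]) auto
qed

end

theorem theorem3p1:
  fixes U :: "'i filter" and M :: "'i \<Rightarrow> 'a set" and d :: "'i \<Rightarrow> 'a \<Rightarrow> 'a \<Rightarrow> real"
    and z :: "'i \<Rightarrow> 'a"
  assumes "is_ultrafilter U"
    and "\<And>i. Metric_space (M i) (d i)"
    and "\<And>i. z i \<in> M i"
  shows
    \<comment> \<open>well-defined: the limit exists and does not depend on the representatives\<close>
    "(\<forall>F\<in>linf_lip M d z. \<forall>x\<in>linf_pts M d z.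
        ((\<lambda>i. F i (x i)) \<longlongrightarrow> Top U M d z (ulip_class U M d z F) (upt_class U M d z x)) U)
     \<comment> \<open>T maps into Lip0 of the ultraproduct\<close>
     \<and> (\<forall>X\<in>ulip U M d z. Top U M d z X \<in> Lip0 (upts U M d z) (udist U d) (ubase U M d z))
     \<comment> \<open>linearity\<close>
     \<and> (\<forall>F\<in>linf_lip M d z. \<forall>G\<in>linf_lip M d z. \<forall>a b::real.
          Top U M d z (ulip_class U M d z (\<lambda>i x. a * F i x + b * G i x))
          = (\<lambda>p. a * Top U M d z (ulip_class U M d z F) p + b * Top U M d z (ulip_class U M d z G) p))
     \<comment> \<open>norm at most one\<close>
     \<and> (\<forall>X\<in>ulip U M d z.
          lipnorm (upts U M d z) (udist U d) (Top U M d z X) \<le> ulip_norm U M d X)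
     \<comment> \<open>T(B) is 1-norming for F((M_i)_U)\<close>
     \<and> norming 1 (Top U M d z ` {X \<in> ulip U M d z. ulip_norm U M d X \<le> 1})
          (upts U M d z) (udist U d) (ubase U M d z)"
proof -
  interpret pointed_ultraproduct U M d z
    by (rule pointed_ultraproduct.intro[OF assms])
  show ?thesis
    by (simp add: Top_tendsto_self Top_Lip0 Top_lincomb lipnorm_Top_le norming_Top_unit_ball)
qed

end
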